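(* Let $A=\{a,b\}$ (discrete) and let $x,y\in\vec I\times\vec I$ be incomparable (neither $x\le y$ nor $y\le x$). Give $\vec I\times\vec I$ the structure $\iota(a)=x$, $\iota(b)=y$. Then for every dimap $\iota_{\vec I}\colon A\to\vec I$ there is no dihomotopy equivalence between $(\vec I\times\vec I,\iota)$ and $(\vec I,\iota_{\vec I})$ in $A$-Posp.
   Context: A pospace is a topological space $U$ with a partial order that is a closed subset of $U\times U$; a dimap is a continuous order-preserving map; products carry the componentwise order. $\vec I=[0,1]$ with its usual order. Fix a pospace $A$. The category $A$-Posp has objects dimaps $\iota_B\colon A\to B$ and morphisms dimaps $f\colon B\to C$ with $f\circ\iota_B=\iota_C$. For morphisms $f,g\colon B\to C$ in $A$-Posp, a dihomotopy from $f$ to $g$ is a dimap $\phi\colon B\times\vec I\to C$ with $\phi(\cdot,0)=f$, $\phi(\cdot,1)=g$ and $\phi(\iota_B(a),t)=\iota_C(a)$ for all $a\in A$, $t$. Write $f\simeq g$ if there is a finite zigzag of such dihomotopies. A morphism $f\colon B\to C$ in $A$-Posp is a dihomotopy equivalence if there is a morphism $g\colon C\to B$ in $A$-Posp with $g\circ f\simeq\mathrm{Id}_B$ and $f\circ g\simeq\mathrm{Id}_C$. *)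

theory Defs
  imports "HOL-Analysis.Analysis"
begin

text \<open>Orders on product types are componentwise (HOL-Library.Product_Order, loaded by
Analysis); topologies on product types are the product topologies.  A pospace is
represented by a subset of an ordered topological type, with the subspace topology and
restricted order (both closed-order properties hold for the concrete spaces used).\<close>

definition dimap_on :: "'b::{topological_space,ord} set \<Rightarrow> 'c::{topological_space,ord} set \<Rightarrow> ('b \<Rightarrow> 'c) \<Rightarrow> bool" where
  "dimap_on S T f \<longleftrightarrow> continuous_on S f \<and> f ` S \<subseteq> T \<and>
     (\<forall>x\<in>S. \<forall>y\<in>S. x \<le> y \<longrightarrow> f x \<le> f y)"

text \<open>Morphisms in A-Posp from (SB, iB) to (SC, iC), with A given by the carrier SA.\<close>
definition Amor :: "'a set \<Rightarrow> 'b::{topological_space,ord} set \<Rightarrow> ('a \<Rightarrow> 'b)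
    \<Rightarrow> 'c::{topological_space,ord} set \<Rightarrow> ('a \<Rightarrow> 'c) \<Rightarrow> ('b \<Rightarrow> 'c) \<Rightarrow> bool" where
  "Amor SA SB iB SC iC f \<longleftrightarrow> dimap_on SB SC f \<and> (\<forall>a\<in>SA. f (iB a) = iC a)"

definition Adihom :: "'a set \<Rightarrow> 'b::{topological_space,ord} set \<Rightarrow> ('a \<Rightarrow> 'b)
    \<Rightarrow> 'c::{topological_space,ord} set \<Rightarrow> ('a \<Rightarrow> 'c) \<Rightarrow> ('b \<Rightarrow> 'c) \<Rightarrow> ('b \<Rightarrow> 'c) \<Rightarrow> bool" where
  "Adihom SA SB iB SC iC f g \<longleftrightarrow> Amor SA SB iB SC iC f \<and> Amor SA SB iB SC iC g \<and>
     (\<exists>\<phi> :: 'b \<times> real \<Rightarrow> 'c. dimap_on (SB \<times> {0..1}) SC \<phi> \<and>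
        (\<forall>x\<in>SB. \<phi> (x, 0) = f x \<and> \<phi> (x, 1) = g x) \<and>
        (\<forall>a\<in>SA. \<forall>t\<in>{0..1}. \<phi> (iB a, t) = iC a))"

definition Adihomotopic :: "'a set \<Rightarrow> 'b::{topological_space,ord} set \<Rightarrow> ('a \<Rightarrow> 'b)
    \<Rightarrow> 'c::{topological_space,ord} set \<Rightarrow> ('a \<Rightarrow> 'c) \<Rightarrow> ('b \<Rightarrow> 'c) \<Rightarrow> ('b \<Rightarrow> 'c) \<Rightarrow> bool" where
  "Adihomotopic SA SB iB SC iC =
     (\<lambda>f g. Adihom SA SB iB SC iC f g \<or> Adihom SA SB iB SC iC g f)\<^sup>*\<^sup>*"

definition Adihomotopy_equivalence :: "'a set \<Rightarrow> 'b::{topological_space,ord} set \<Rightarrow> ('a \<Rightarrow> 'b)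
    \<Rightarrow> 'c::{topological_space,ord} set \<Rightarrow> ('a \<Rightarrow> 'c) \<Rightarrow> ('b \<Rightarrow> 'c) \<Rightarrow> bool" where
  "Adihomotopy_equivalence SA SB iB SC iC f \<longleftrightarrow> Amor SA SB iB SC iC f \<and>
     (\<exists>g. Amor SA SC iC SB iB g \<and>
        Adihomotopic SA SB iB SB iB (g \<circ> f) id \<and>
        Adihomotopic SA SC iC SC iC (f \<circ> g) id)"

end

theory Submission
  imports Defs
begin

text \<open>A dihomotopy equivalence in either direction supplies a morphism from
\<open>(I, \<iota>\<^sub>I)\<close> to \<open>(I \<times> I, \<iota>)\<close>. It is order preserving on the totally ordered
\<open>I\<close>, so it sends the comparable points \<open>\<iota>\<^sub>I(a)\<close>, \<open>\<iota>\<^sub>I(b)\<close> to comparable points;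
but their images are the incomparable \<open>x\<close> and \<open>y\<close>.\<close>

lemma dimap_on_linorder_comparable:
  fixes S :: "'b::{topological_space,linorder} set"
  assumes "dimap_on S T f" "u \<in> S" "v \<in> S"
  shows "f u \<le> f v \<or> f v \<le> f u"
  using assms linear[of u v] unfolding dimap_on_def by blast

lemma Amor_linorder_comparable:
  fixes iB :: "'a \<Rightarrow> 'b::{topological_space,linorder}"
  assumes "Amor SA SB iB SC iC f" "iB ` SA \<subseteq> SB" "a \<in> SA" "a' \<in> SA"
  shows "iC a \<le> iC a' \<or> iC a' \<le> iC a"
proof -
  have "f (iB a) \<le> f (iB a') \<or> f (iB a') \<le> f (iB a)"
    using assms by (intro dimap_on_linorder_comparable[of SB SC]) (auto simp: Amor_def)
  then show ?thesis
    using assms(1,3,4) by (simp add: Amor_def)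
qed

theorem mainTheorem7:
  fixes a b :: 'a and x y :: "real \<times> real" and iI :: "'a \<Rightarrow> real"
  assumes "a \<noteq> b"
    and "x \<in> {0..1} \<times> {0..1}" and "y \<in> {0..1} \<times> {0..1}"
    and "\<not> x \<le> y" and "\<not> y \<le> x"
    and "iI ` {a, b} \<subseteq> {0..1}"
  shows "\<not> (\<exists>f. Adihomotopy_equivalence {a, b} ({0..1} \<times> {0..1}) (\<lambda>c. if c = a then x else y)
                   {0..1} iI f)
       \<and> \<not> (\<exists>g. Adihomotopy_equivalence {a, b} {0..1} iI
                   ({0..1} \<times> {0..1}) (\<lambda>c. if c = a then x else y) g)"
proof -
  have no_morphism_from_I:
    "\<not> Amor {a, b} {0..1} iI ({0..1} \<times> {0..1}) (\<lambda>c. if c = a then x else y) g" for g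
  proof
    assume mor: "Amor {a, b} {0..1} iI ({0..1} \<times> {0..1}) (\<lambda>c. if c = a then x else y) g"
    have "x \<le> y \<or> y \<le> x"
      using Amor_linorder_comparable[OF mor assms(6), of a b] assms(1) by simp
    with assms(4,5) show False
      by blast
  qed
  then show ?thesis
    by (simp add: Adihomotopy_equivalence_def)
qed

end
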